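(* Let $\alpha>0$ and consider the equilibria of $$\frac{d}{dt}v_n=-n^2v_n+\alpha v_n-2v_n\|v\|_H^2+v_n|v_n|^2,\quad n\in\mathbb Z.$$ Then every equilibrium having two or more nonzero components ($v_m\ne0$ and $v_k\ne0$ for some $m\ne k$) is unstable. The only stable equilibria are the one-component ones: $v_n=0$ for $n\ne k$, $v_k\ne0$, with $k^2<\frac{\alpha}{2}$.
   Context: $e_n=e^{inx}$, $H=L^2_{per}(-\pi,\pi)$ complex-valued, $v=\sum v_ne_n$, $\|v\|_H^2=\sum|v_n|^2$. The system is invariant under $v_n\mapsto e^{i\phi_n}v_n$, so each equilibrium may be rotated to a real one; (in)stability is understood for the real-valued system, via its linearization at a real equilibrium $v$ on real perturbations, $\frac d{dt}\theta_n=-n^2\theta_n+\alpha\theta_n-2\theta_n\|v\|_H^2-4v_n(v,\theta)+3\theta_nv_n^2$: unstable if this operator has a positive part of the spectrum, stable if all its eigenvalues are negative. *)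

theory Defs
  imports "HOL-Analysis.Analysis"
begin

text \<open>Sequences indexed by the Fourier modes n \<in> Z; v n is the coefficient of e_n.
  The space H = L^2_per corresponds to square-summable coefficient sequences.\<close>

definition l2seq :: "(int \<Rightarrow> 'a::real_normed_vector) \<Rightarrow> bool" where
  "l2seq v \<longleftrightarrow> (\<lambda>n. (norm (v n))^2) summable_on UNIV"

definition hnorm2 :: "(int \<Rightarrow> 'a::real_normed_vector) \<Rightarrow> real" where
  "hnorm2 v = (\<Sum>\<^sub>\<infinity>n. (norm (v n))^2)"

definition hinner :: "(int \<Rightarrow> real) \<Rightarrow> (int \<Rightarrow> real) \<Rightarrow> real" where
  "hinner v \<theta> = (\<Sum>\<^sub>\<infinity>n. v n * \<theta> n)"

definition equilibrium :: "real \<Rightarrow> (int \<Rightarrow> complex) \<Rightarrow> bool" where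
  "equilibrium \<alpha> v \<longleftrightarrow> l2seq v \<and>
     (\<forall>n. - ((of_int n)^2) * v n + complex_of_real \<alpha> * v n
           - 2 * v n * complex_of_real (hnorm2 v) + v n * complex_of_real ((cmod (v n))^2) = 0)"

definition real_rotation :: "(int \<Rightarrow> complex) \<Rightarrow> (int \<Rightarrow> real) \<Rightarrow> bool" where
  "real_rotation v w \<longleftrightarrow> (\<exists>\<phi> :: int \<Rightarrow> real. \<forall>n. complex_of_real (w n) = exp (\<i> * of_real (\<phi> n)) * v n)"

text \<open>Linearization at a real equilibrium v, acting on real perturbations theta:
  (L theta)_n = -n^2 theta_n + alpha theta_n - 2 theta_n ||v||^2 - 4 v_n (v,theta) + 3 theta_n v_n^2.\<close>
definition linop :: "real \<Rightarrow> (int \<Rightarrow> real) \<Rightarrow> (int \<Rightarrow> real) \<Rightarrow> (int \<Rightarrow> real)" where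
  "linop \<alpha> v \<theta> = (\<lambda>n. - ((of_int n)^2) * \<theta> n + \<alpha> * \<theta> n - 2 * \<theta> n * hnorm2 v
                        - 4 * v n * hinner v \<theta> + 3 * \<theta> n * (v n)^2)"

definition lindom :: "(int \<Rightarrow> real) set" where
  "lindom = {\<theta>. l2seq \<theta> \<and> l2seq (\<lambda>n. (of_int n)^2 * \<theta> n)}"

definition lin_spectrum :: "real \<Rightarrow> (int \<Rightarrow> real) \<Rightarrow> real set" where
  "lin_spectrum \<alpha> v = {\<mu>. \<not> ((\<forall>f. l2seq f \<longrightarrow> (\<exists>\<theta>\<in>lindom. (\<lambda>n. linop \<alpha> v \<theta> n - \<mu> * \<theta> n) = f)) \<and>
        (\<exists>C. \<forall>\<theta>\<in>lindom. hnorm2 \<theta> \<le> C * hnorm2 (\<lambda>n. linop \<alpha> v \<theta> n - \<mu> * \<theta> n)))}"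

definition lin_eigenvalue :: "real \<Rightarrow> (int \<Rightarrow> real) \<Rightarrow> real \<Rightarrow> bool" where
  "lin_eigenvalue \<alpha> v \<mu> \<longleftrightarrow> (\<exists>\<theta>\<in>lindom. \<theta> \<noteq> (\<lambda>_. 0) \<and> linop \<alpha> v \<theta> = (\<lambda>n. \<mu> * \<theta> n))"

definition real_unstable :: "real \<Rightarrow> (int \<Rightarrow> real) \<Rightarrow> bool" where
  "real_unstable \<alpha> v \<longleftrightarrow> (\<exists>\<mu>\<in>lin_spectrum \<alpha> v. \<mu> > 0)"

definition real_stable :: "real \<Rightarrow> (int \<Rightarrow> real) \<Rightarrow> bool" where
  "real_stable \<alpha> v \<longleftrightarrow> (\<forall>\<mu>. lin_eigenvalue \<alpha> v \<mu> \<longrightarrow> \<mu> < 0)"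

text \<open>(In)stability of a (complex) equilibrium is understood via its real rotations.\<close>
definition unstable_eq :: "real \<Rightarrow> (int \<Rightarrow> complex) \<Rightarrow> bool" where
  "unstable_eq \<alpha> v \<longleftrightarrow> (\<forall>w. real_rotation v w \<longrightarrow> real_unstable \<alpha> w)"

definition stable_eq :: "real \<Rightarrow> (int \<Rightarrow> complex) \<Rightarrow> bool" where
  "stable_eq \<alpha> v \<longleftrightarrow> (\<forall>w. real_rotation v w \<longrightarrow> real_stable \<alpha> w)"

end

theory Submission
  imports Defs
begin

(*
  At an equilibrium every nonzero mode satisfies |v_n|^2 = n^2 - alpha + 2 ||v||^2, so the
  support N is finite. Off N the linearization is diagonal with entries alpha - n^2 - 2 ||v||^2;
  on N it is the symmetric matrix 2 diag(v_n^2) - 4 v v^T. If |N| >= 2 this rank-one perturbation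
  of a positive diagonal matrix has a positive eigenvalue: either two diagonal entries coincide,
  and a vector supported on those two modes and orthogonal to v is an eigenvector, or the secular
  equation sum_j 4 v_j^2 / (2 v_j^2 - mu) = 1 has a root strictly between the two smallest
  diagonal entries (intermediate value theorem for its characteristic polynomial).
  For a single mode k the linearization is diagonal, with entry 2k^2 - 2 alpha at k and
  2k^2 - n^2 - alpha at n /= k; these are all negative iff 2k^2 < alpha (look at n = 0).
*)

subsection \<open>Rank-one perturbations of diagonal matrices\<close>

definition secular_poly :: "'a set \<Rightarrow> ('a \<Rightarrow> real) \<Rightarrow> ('a \<Rightarrow> real) \<Rightarrow> real \<Rightarrow> real" where
  "secular_poly N a c \<mu> = (\<Prod>j\<in>N. a j - \<mu>) - (\<Sum>j\<in>N. c j * (\<Prod>i\<in>N - {j}. a i - \<mu>))"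

lemma secular_poly_eq:
  assumes "finite N" "\<And>j. j \<in> N \<Longrightarrow> a j \<noteq> \<mu>"
  shows "secular_poly N a c \<mu> = (\<Prod>j\<in>N. a j - \<mu>) * (1 - (\<Sum>j\<in>N. c j / (a j - \<mu>)))"
proof -
  have "(\<Prod>i\<in>N - {j}. a i - \<mu>) = (\<Prod>j\<in>N. a j - \<mu>) / (a j - \<mu>)" if "j \<in> N" for j
    using prod.remove[OF assms(1) that, of "\<lambda>i. a i - \<mu>"] assms(2)[OF that] by simp
  then show ?thesis
    unfolding secular_poly_def by (simp add: right_diff_distrib sum_distrib_left mult.commute)
qed

lemma secular_poly_at_pole:
  assumes "finite N" "m \<in> N"
  shows "secular_poly N a c (a m) = - c m * (\<Prod>i\<in>N - {m}. a i - a m)"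
proof -
  have "(\<Prod>j\<in>N. a j - a m) = 0"
    using assms by (auto simp: prod_zero_iff)
  moreover have "(\<Sum>j\<in>N - {m}. c j * (\<Prod>i\<in>N - {j}. a i - a m)) = 0"
    using assms by (intro sum.neutral ballI) (auto simp: prod_zero_iff)
  ultimately show ?thesis
    unfolding secular_poly_def
    using sum.remove[OF assms, of "\<lambda>j. c j * (\<Prod>i\<in>N - {j}. a i - a m)"] by simp
qed

lemma secular_equation_root:
  fixes a c :: "'a \<Rightarrow> real"
  assumes fin: "finite N" and pq: "p \<in> N" "q \<in> N" "a p < a q"
    and above: "\<And>n. n \<in> N - {p, q} \<Longrightarrow> a q < a n"
    and c_pos: "\<And>n. n \<in> N \<Longrightarrow> c n > 0"
  shows "\<exists>\<mu>. a p < \<mu> \<and> \<mu> < a q \<and> (\<Sum>j\<in>N. c j / (a j - \<mu>)) = 1"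
proof -
  let ?g = "secular_poly N a c" and ?P = "\<lambda>m. \<Prod>i\<in>N - {p, q}. a i - a m"
  have P_pos: "?P m > 0" if "m = p \<or> m = q" for m
  proof (rule prod_pos)
    fix i assume "i \<in> N - {p, q}"
    then show "0 < a i - a m" using above[of i] pq(3) that by auto
  qed
  have "N - {p} - {q} = N - {p, q}" "N - {q} - {p} = N - {p, q}" by auto
  then have "(\<Prod>i\<in>N - {p}. a i - a p) = (a q - a p) * ?P p"
    "(\<Prod>i\<in>N - {q}. a i - a q) = (a p - a q) * ?P q"
    using prod.remove[of "N - {p}" q "\<lambda>i. a i - a p"] prod.remove[of "N - {q}" p "\<lambda>i. a i - a q"]
      fin pq by auto
  then have "?g (a p) = - (c p * ((a q - a p) * ?P p))" "?g (a q) = - (c q * ((a p - a q) * ?P q))"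
    using secular_poly_at_pole[OF fin pq(1), where a = a and c = c]
      secular_poly_at_pole[OF fin pq(2), where a = a and c = c]
    by simp_all
  moreover have "c p * ((a q - a p) * ?P p) > 0" "c q * ((a p - a q) * ?P q) < 0"
    using c_pos pq P_pos by (simp_all add: mult_pos_neg mult_neg_pos)
  ultimately have g_ap: "?g (a p) < 0" and g_aq: "?g (a q) > 0"
    by simp_all
  have "continuous_on {a p..a q} ?g"
    unfolding secular_poly_def by (intro continuous_intros)
  then obtain \<mu> where \<mu>: "a p \<le> \<mu>" "\<mu> \<le> a q" "?g \<mu> = 0"
    using IVT'[of ?g "a p" 0 "a q"] g_ap g_aq pq(3) by force
  then have strict: "a p < \<mu>" "\<mu> < a q"
    using g_ap g_aq by (auto simp: order.order_iff_strict)
  have no_pole: "a j \<noteq> \<mu>" if "j \<in> N" for j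
    using strict above[of j] that by (cases "j = p \<or> j = q") auto
  then have "(\<Sum>j\<in>N. c j / (a j - \<mu>)) = 1"
    using \<mu>(3) secular_poly_eq[OF fin no_pole, where c = c] fin by simp
  with strict show ?thesis by blast
qed

lemma diag_sq_minus_rank_one_pos_eigenvector:
  fixes w :: "'a \<Rightarrow> real"
  assumes fin: "finite N" and pq: "p \<in> N" "q \<in> N" "p \<noteq> q"
    and nz: "\<And>n. n \<in> N \<Longrightarrow> w n \<noteq> 0"
  shows "\<exists>\<mu>>0. \<exists>\<theta>. \<theta> \<noteq> (\<lambda>_. 0) \<and> (\<forall>n. n \<notin> N \<longrightarrow> \<theta> n = 0) \<and>
           (\<forall>n\<in>N. 2 * (w n)^2 * \<theta> n - 4 * w n * (\<Sum>j\<in>N. w j * \<theta> j) = \<mu> * \<theta> n)"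
proof (cases "\<exists>m\<in>N. \<exists>k\<in>N. m \<noteq> k \<and> (w m)^2 = (w k)^2")
  case True
  then obtain m k where mk: "m \<in> N" "k \<in> N" "m \<noteq> k" "(w m)^2 = (w k)^2" by blast
  define \<theta> where "\<theta> n = (if n = m then w k else if n = k then - w m else 0)" for n
  have "(\<Sum>j\<in>N. w j * \<theta> j) = (\<Sum>j\<in>{m, k}. w j * \<theta> j)"
    by (rule sum.mono_neutral_right) (use fin mk in \<open>auto simp: \<theta>_def\<close>)
  then have orth: "(\<Sum>j\<in>N. w j * \<theta> j) = 0"
    using mk by (simp add: \<theta>_def)
  have "\<theta> \<noteq> (\<lambda>_. 0)"
    using nz[OF mk(2)] mk(3) by (auto simp: \<theta>_def fun_eq_iff)
  moreover have "\<forall>n. n \<notin> N \<longrightarrow> \<theta> n = 0"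
    using mk by (simp add: \<theta>_def)
  moreover have "\<forall>n\<in>N. 2 * (w n)^2 * \<theta> n - 4 * w n * (\<Sum>j\<in>N. w j * \<theta> j) = 2 * (w m)^2 * \<theta> n"
    using mk orth by (auto simp: \<theta>_def)
  moreover have "2 * (w m)^2 > 0"
    using nz[OF mk(1)] by simp
  ultimately show ?thesis by blast
next
  case False
  define a where "a n = 2 * (w n)^2" for n
  have a_pos: "a n > 0" if "n \<in> N" for n
    using nz[OF that] by (simp add: a_def)
  have a_inj: "a m \<noteq> a k" if "m \<in> N" "k \<in> N" "m \<noteq> k" for m k
    using False that by (auto simp: a_def)
  define p1 where "p1 = arg_min_on a N"
  define p2 where "p2 = arg_min_on a (N - {p1})"
  have p1: "p1 \<in> N" "\<And>n. n \<in> N \<Longrightarrow> a p1 \<le> a n"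
    using pq fin by (auto simp: p1_def intro: arg_min_if_finite arg_min_least)
  have rest: "finite (N - {p1})" "N - {p1} \<noteq> {}" using fin pq by auto
  have p2: "p2 \<in> N - {p1}" "\<And>n. n \<in> N - {p1} \<Longrightarrow> a p2 \<le> a n"
    unfolding p2_def using arg_min_if_finite(1)[OF rest] arg_min_least[OF rest] by auto
  have "a p1 < a p2"
    using p1(2)[of p2] p1(1) p2(1) a_inj[of p1 p2] by force
  moreover have "a p2 < a n" if "n \<in> N - {p1, p2}" for n
    using p2(2)[of n] a_inj[of p2 n] p2(1) that by force
  ultimately obtain \<mu> where \<mu>: "a p1 < \<mu>" "\<mu> < a p2" "(\<Sum>j\<in>N. 4 * (w j)^2 / (a j - \<mu>)) = 1"
    using secular_equation_root[of N p1 p2 a "\<lambda>n. 4 * (w n)^2"] fin p1(1) p2(1) nz by force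
  have no_pole: "a n - \<mu> \<noteq> 0" if "n \<in> N" for n
    using p1(2)[of n] p2(2)[of n] \<mu> that by (cases "n = p1") auto
  define \<theta> where "\<theta> n = (if n \<in> N then w n / (a n - \<mu>) else 0)" for n
  have "4 * (\<Sum>j\<in>N. w j * \<theta> j) = (\<Sum>j\<in>N. 4 * (w j)^2 / (a j - \<mu>))"
    unfolding sum_distrib_left by (rule sum.cong) (simp_all add: \<theta>_def power2_eq_square)
  then have inner: "(\<Sum>j\<in>N. w j * \<theta> j) = 1 / 4"
    using \<mu>(3) by simp
  have "2 * (w n)^2 * \<theta> n - 4 * w n * (\<Sum>j\<in>N. w j * \<theta> j) = \<mu> * \<theta> n" if "n \<in> N" for n
    using no_pole[OF that] that unfolding inner by (simp add: \<theta>_def a_def field_simps)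
  moreover have "\<theta> \<noteq> (\<lambda>_. 0)"
    using nz[OF pq(1)] no_pole[OF pq(1)] pq(1) by (auto simp: \<theta>_def fun_eq_iff)
  moreover have "\<forall>n. n \<notin> N \<longrightarrow> \<theta> n = 0"
    by (simp add: \<theta>_def)
  moreover have "\<mu> > 0"
    using a_pos[OF p1(1)] \<mu>(1) by simp
  ultimately show ?thesis by blast
qed

lemma infsum_finite_support:
  fixes f :: "'a \<Rightarrow> 'b::{topological_comm_monoid_add, t2_space}"
  assumes "finite F" "\<And>x. x \<notin> F \<Longrightarrow> f x = 0"
  shows "infsum f UNIV = sum f F"
  by (rule infsumI, rule has_sum_finite_neutralI) (use assms in auto)

lemma norm_sq_le_hnorm2:
  assumes "l2seq v"
  shows "(norm (v n))^2 \<le> hnorm2 v"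
  using finite_sum_le_infsum[of "\<lambda>n. (norm (v n))^2" UNIV "{n}"] assms
  unfolding l2seq_def hnorm2_def by simp

lemma hnorm2_nonneg: "hnorm2 v \<ge> 0"
  unfolding hnorm2_def by (rule infsum_nonneg) simp

lemma finite_support_in_lindom:
  assumes "finite {n. \<theta> n \<noteq> 0}"
  shows "\<theta> \<in> lindom"
  unfolding lindom_def l2seq_def
  by (auto intro!: finite_nonzero_values_imp_summable_on finite_subset[OF _ assms])

lemma real_rotation_abs:
  assumes "real_rotation v w"
  shows "\<bar>w n\<bar> = cmod (v n)"
proof -
  obtain \<phi> where "\<And>n. complex_of_real (w n) = exp (\<i> * of_real (\<phi> n)) * v n"
    using assms unfolding real_rotation_def by blast
  then have "cmod (complex_of_real (w n)) = cmod (v n)"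
    by (simp add: norm_mult)
  then show ?thesis by simp
qed

lemma real_rotation_square:
  assumes "real_rotation v w"
  shows "(w n)^2 = (cmod (v n))^2"
  using real_rotation_abs[OF assms] by (metis power2_abs)

lemma real_rotation_nonzero_iff:
  assumes "real_rotation v w"
  shows "w n \<noteq> 0 \<longleftrightarrow> v n \<noteq> 0"
  using real_rotation_abs[OF assms, of n] by auto

lemma hnorm2_real_rotation:
  assumes "real_rotation v w"
  shows "hnorm2 w = hnorm2 v"
  unfolding hnorm2_def using real_rotation_square[OF assms] by simp

lemma real_rotation_cmod: "real_rotation v (\<lambda>n. cmod (v n))"
  unfolding real_rotation_def
proof (intro exI allI)
  fix n
  show "complex_of_real (cmod (v n)) = exp (\<i> * of_real (- Arg (v n))) * v n"
  proof (cases "v n = 0")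
    case False
    have "exp (\<i> * of_real (- Arg (v n))) * v n
        = of_real (cmod (v n)) * (exp (\<i> * of_real (- Arg (v n))) * exp (\<i> * Arg (v n)))"
      using Arg_eq[OF False] by (simp add: algebra_simps)
    also have "exp (\<i> * of_real (- Arg (v n))) * exp (\<i> * Arg (v n)) = 1"
      by (simp add: exp_add[symmetric])
    finally show ?thesis by simp
  qed simp
qed

lemma equilibrium_mode_square:
  assumes "equilibrium \<alpha> v" "v n \<noteq> 0"
  shows "(cmod (v n))^2 = (of_int n)^2 - \<alpha> + 2 * hnorm2 v"
proof -
  have "v n * complex_of_real (- ((of_int n)^2) + \<alpha> - 2 * hnorm2 v + (cmod (v n))^2) = 0"
    using assms(1) unfolding equilibrium_def by (simp add: algebra_simps)
  then have "complex_of_real (- ((of_int n)^2) + \<alpha> - 2 * hnorm2 v + (cmod (v n))^2) = 0"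
    using assms(2) by simp
  then show ?thesis
    by (simp only: of_real_eq_0_iff)
qed

lemma equilibrium_finite_support:
  assumes "equilibrium \<alpha> v"
  shows "finite {n. v n \<noteq> 0}"
proof (rule finite_subset)
  show "{n. v n \<noteq> 0} \<subseteq> {-\<lceil>\<alpha>\<rceil>..\<lceil>\<alpha>\<rceil>}"
  proof
    fix n assume "n \<in> {n. v n \<noteq> 0}"
    then have "(of_int n)^2 - \<alpha> + 2 * hnorm2 v \<le> hnorm2 v"
      using equilibrium_mode_square[OF assms] norm_sq_le_hnorm2[of v n] assms
      by (simp add: equilibrium_def)
    then have "real_of_int (n^2) \<le> \<alpha>"
      using hnorm2_nonneg[of v] by simp
    moreover have "\<bar>n\<bar> \<le> n^2"
      using self_le_power[of "\<bar>n\<bar>" 2] by (cases "n = 0") auto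
    ultimately have "real_of_int \<bar>n\<bar> \<le> \<alpha>"
      by (metis of_int_le_iff order.trans)
    then have "\<bar>n\<bar> \<le> \<lceil>\<alpha>\<rceil>"
      by (simp add: le_ceiling_iff)
    then show "n \<in> {-\<lceil>\<alpha>\<rceil>..\<lceil>\<alpha>\<rceil>}" by auto
  qed
qed simp

lemma hinner_real_rotation:
  assumes "equilibrium \<alpha> v" "real_rotation v w"
  shows "hinner w \<theta> = (\<Sum>n\<in>{n. v n \<noteq> 0}. w n * \<theta> n)"
  unfolding hinner_def
  by (rule infsum_finite_support)
     (use equilibrium_finite_support[OF assms(1)] real_rotation_nonzero_iff[OF assms(2)] in auto)

lemma single_mode_hnorm2:
  assumes "equilibrium \<alpha> v" "v k \<noteq> 0" "\<forall>n. n \<noteq> k \<longrightarrow> v n = 0"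
  shows "hnorm2 v = \<alpha> - (of_int k)^2"
proof -
  have "hnorm2 v = (cmod (v k))^2"
    unfolding hnorm2_def using assms(3) by (subst infsum_finite_support[of "{k}"]) auto
  then show ?thesis
    using equilibrium_mode_square[OF assms(1,2)] by simp
qed

lemma linop_on_support:
  assumes "equilibrium \<alpha> v" "real_rotation v w" "v n \<noteq> 0"
  shows "linop \<alpha> w \<theta> n = 2 * (w n)^2 * \<theta> n - 4 * w n * hinner w \<theta>"
proof -
  have w_sq: "(w n)^2 = (of_int n)^2 - \<alpha> + 2 * hnorm2 v"
    using real_rotation_square[OF assms(2)] equilibrium_mode_square[OF assms(1,3)] by simp
  show ?thesis
    unfolding linop_def hnorm2_real_rotation[OF assms(2)] w_sq by (simp add: algebra_simps)
qed

lemma linop_off_support: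
  assumes "real_rotation v w" "v n = 0"
  shows "linop \<alpha> w \<theta> n = (\<alpha> - (of_int n)^2 - 2 * hnorm2 v) * \<theta> n"
proof -
  have "w n = 0"
    using real_rotation_nonzero_iff[OF assms(1), of n] assms(2) by blast
  then show ?thesis
    by (simp add: linop_def hnorm2_real_rotation[OF assms(1)] algebra_simps)
qed

lemma lin_eigenvalue_in_spectrum:
  assumes "lin_eigenvalue \<alpha> w \<mu>"
  shows "\<mu> \<in> lin_spectrum \<alpha> w"
proof -
  obtain \<theta> where \<theta>: "\<theta> \<in> lindom" "\<theta> \<noteq> (\<lambda>_. 0)" "linop \<alpha> w \<theta> = (\<lambda>n. \<mu> * \<theta> n)"
    using assms unfolding lin_eigenvalue_def by blast
  then obtain m where "\<theta> m \<noteq> 0" by auto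
  then have "0 < (norm (\<theta> m))^2" by simp
  also have "(norm (\<theta> m))^2 \<le> hnorm2 \<theta>"
    using \<theta>(1) by (intro norm_sq_le_hnorm2) (simp add: lindom_def)
  finally have "hnorm2 \<theta> > 0" .
  moreover have "hnorm2 (\<lambda>n. linop \<alpha> w \<theta> n - \<mu> * \<theta> n) = 0"
    using \<theta>(3) by (simp add: hnorm2_def)
  ultimately have "\<not> (\<exists>C. \<forall>\<theta>\<in>lindom. hnorm2 \<theta> \<le> C * hnorm2 (\<lambda>n. linop \<alpha> w \<theta> n - \<mu> * \<theta> n))"
    using \<theta>(1) by force
  then show ?thesis unfolding lin_spectrum_def by blast
qed

lemma lin_eigenvalue_diagonal:
  assumes "\<And>\<theta> n. linop \<alpha> w \<theta> n = d n * \<theta> n"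
  shows "lin_eigenvalue \<alpha> w \<mu> \<longleftrightarrow> (\<exists>n. \<mu> = d n)"
proof
  assume "lin_eigenvalue \<alpha> w \<mu>"
  then obtain \<theta> where "\<theta> \<noteq> (\<lambda>_. 0)" "linop \<alpha> w \<theta> = (\<lambda>n. \<mu> * \<theta> n)"
    unfolding lin_eigenvalue_def by blast
  then obtain n where "\<theta> n \<noteq> 0" "d n * \<theta> n = \<mu> * \<theta> n"
    using assms by (metis fun_eq_iff)
  then show "\<exists>n. \<mu> = d n" by auto
next
  assume "\<exists>n. \<mu> = d n"
  then obtain n where n: "\<mu> = d n" ..
  define e where "e m = (if m = n then 1 else 0 :: real)" for m
  have "e \<in> lindom"
    by (rule finite_support_in_lindom) (simp add: e_def)
  moreover have "e \<noteq> (\<lambda>_. 0)" "linop \<alpha> w e = (\<lambda>m. \<mu> * e m)"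
    using n assms by (auto simp: e_def fun_eq_iff)
  ultimately show "lin_eigenvalue \<alpha> w \<mu>"
    unfolding lin_eigenvalue_def by blast
qed

lemma multi_mode_pos_eigenvalue:
  assumes eq: "equilibrium \<alpha> v" and rot: "real_rotation v w"
    and pq: "p \<noteq> q" "v p \<noteq> 0" "v q \<noteq> 0"
  shows "\<exists>\<mu>>0. lin_eigenvalue \<alpha> w \<mu>"
proof -
  define N where "N = {n. v n \<noteq> 0}"
  have fin: "finite N"
    using equilibrium_finite_support[OF eq] by (simp add: N_def)
  obtain \<mu> \<theta> where \<mu>: "\<mu> > 0" and \<theta>: "\<theta> \<noteq> (\<lambda>_. 0)" "\<forall>n. n \<notin> N \<longrightarrow> \<theta> n = 0"
    "\<forall>n\<in>N. 2 * (w n)^2 * \<theta> n - 4 * w n * (\<Sum>j\<in>N. w j * \<theta> j) = \<mu> * \<theta> n"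
    using diag_sq_minus_rank_one_pos_eigenvector[OF fin, of p q w] pq real_rotation_nonzero_iff[OF rot]
    by (auto simp: N_def)
  have "\<theta> \<in> lindom"
    using \<theta>(2) by (intro finite_support_in_lindom finite_subset[OF _ fin]) auto
  moreover have "linop \<alpha> w \<theta> n = \<mu> * \<theta> n" for n
    using \<theta>(2,3) linop_on_support[OF eq rot, of n \<theta>] linop_off_support[OF rot, of n \<alpha> \<theta>]
      hinner_real_rotation[OF eq rot, of \<theta>]
    by (cases "n \<in> N") (auto simp: N_def)
  ultimately show ?thesis
    using \<mu> \<theta>(1) unfolding lin_eigenvalue_def by blast
qed

lemma unstable_eq_multi_mode:
  assumes "equilibrium \<alpha> v" "p \<noteq> q" "v p \<noteq> 0" "v q \<noteq> 0"
  shows "unstable_eq \<alpha> v"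
  using multi_mode_pos_eigenvalue[OF assms(1) _ assms(2-4)] lin_eigenvalue_in_spectrum
  unfolding unstable_eq_def real_unstable_def by blast

lemma not_stable_eq_multi_mode:
  assumes "equilibrium \<alpha> v" "p \<noteq> q" "v p \<noteq> 0" "v q \<noteq> 0"
  shows "\<not> stable_eq \<alpha> v"
  using multi_mode_pos_eigenvalue[OF assms(1) real_rotation_cmod assms(2-4)] real_rotation_cmod[of v]
  unfolding stable_eq_def real_stable_def by (metis less_asym)

lemma not_stable_eq_zero:
  assumes "\<alpha> > 0"
  shows "\<not> stable_eq \<alpha> (\<lambda>_. 0)"
proof -
  have rot: "real_rotation (\<lambda>_. 0) (\<lambda>_. 0)"
    using real_rotation_cmod[of "\<lambda>_. 0"] by simp
  have "hnorm2 (\<lambda>_::int. 0::complex) = 0" by (simp add: hnorm2_def)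
  then have "linop \<alpha> (\<lambda>_. 0) \<theta> n = (\<alpha> - (of_int n)^2) * \<theta> n" for \<theta> n
    using linop_off_support[OF rot, where \<alpha> = \<alpha> and n = n] by simp
  then have "lin_eigenvalue \<alpha> (\<lambda>_. 0) \<alpha>"
    using lin_eigenvalue_diagonal[of \<alpha> "\<lambda>_. 0" "\<lambda>n. \<alpha> - (of_int n)^2"] by force
  then show ?thesis
    using assms rot unfolding stable_eq_def real_stable_def by fastforce
qed

lemma single_mode_linop:
  assumes eq: "equilibrium \<alpha> v" and rot: "real_rotation v w"
    and k: "v k \<noteq> 0" "\<forall>n. n \<noteq> k \<longrightarrow> v n = 0"
  shows "linop \<alpha> w \<theta> n =
    (if n = k then 2 * (of_int k)^2 - 2 * \<alpha> else 2 * (of_int k)^2 - (of_int n)^2 - \<alpha>) * \<theta> n"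
proof (cases "n = k")
  case True
  have "{n. v n \<noteq> 0} = {k}" using k by auto
  then have "hinner w \<theta> = w k * \<theta> k"
    using hinner_real_rotation[OF eq rot] by simp
  then have "linop \<alpha> w \<theta> k = - 2 * (w k)^2 * \<theta> k"
    using linop_on_support[OF eq rot k(1), of \<theta>] by (simp add: power2_eq_square algebra_simps)
  moreover have "(w k)^2 = \<alpha> - (of_int k)^2"
    using real_rotation_square[OF rot] equilibrium_mode_square[OF eq k(1)] single_mode_hnorm2[OF eq k]
    by simp
  ultimately show ?thesis
    using True by (simp add: algebra_simps)
next
  case False
  then show ?thesis
    using linop_off_support[OF rot] k(2) single_mode_hnorm2[OF eq k] by simp
qed

lemma stable_eq_single_mode_iff:
  assumes eq: "equilibrium \<alpha> v" and k: "v k \<noteq> 0" "\<forall>n. n \<noteq> k \<longrightarrow> v n = 0"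
  shows "stable_eq \<alpha> v \<longleftrightarrow> (of_int k)^2 < \<alpha> / 2"
proof -
  define d where "d n = (if n = k then 2 * (of_int k)^2 - 2 * \<alpha> else 2 * (of_int k)^2 - (of_int n)^2 - \<alpha>)"
    for n :: int
  have "lin_eigenvalue \<alpha> w \<mu> \<longleftrightarrow> (\<exists>n. \<mu> = d n)" if "real_rotation v w" for w \<mu>
    unfolding d_def by (rule lin_eigenvalue_diagonal[OF single_mode_linop[OF eq that k]])
  then have "stable_eq \<alpha> v \<longleftrightarrow> (\<forall>\<mu>. (\<exists>n. \<mu> = d n) \<longrightarrow> \<mu> < 0)"
    unfolding stable_eq_def real_stable_def using real_rotation_cmod[of v] by blast
  also have "\<dots> \<longleftrightarrow> (\<forall>n. d n < 0)"
    by blast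
  also have "\<dots> \<longleftrightarrow> (of_int k)^2 < \<alpha> / 2"
  proof
    assume neg: "\<forall>n. d n < 0"
    have "\<alpha> - (of_int k)^2 = (cmod (v k))^2"
      using single_mode_hnorm2[OF eq k] equilibrium_mode_square[OF eq k(1)] by simp
    moreover have "(cmod (v k))^2 > 0"
      using k(1) by simp
    ultimately have "(of_int k)^2 < \<alpha>"
      by linarith
    with neg show "(of_int k)^2 < \<alpha> / 2"
      by (cases "k = 0") (auto simp: d_def dest: spec[of _ 0])
  next
    assume k_small: "(of_int k)^2 < \<alpha> / 2"
    then have "\<alpha> > 0"
      using zero_le_power2[of "real_of_int k"] by linarith
    show "\<forall>n. d n < 0"
    proof
      fix n
      have "d n \<le> 2 * (of_int k)^2 - \<alpha>"
        using zero_le_power2[of "real_of_int n"] zero_le_power2[of "real_of_int k"]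
        unfolding d_def using \<open>\<alpha> > 0\<close> by simp
      then show "d n < 0" using k_small by linarith
    qed
  qed
  finally show ?thesis .
qed

theorem lemma5p2:
  fixes \<alpha> :: real
  assumes "\<alpha> > 0"
  shows "(\<forall>v. equilibrium \<alpha> v \<and> (\<exists>m k. m \<noteq> k \<and> v m \<noteq> 0 \<and> v k \<noteq> 0) \<longrightarrow> unstable_eq \<alpha> v)
       \<and> (\<forall>v. equilibrium \<alpha> v \<longrightarrow>
              (stable_eq \<alpha> v \<longleftrightarrow>
                 (\<exists>k::int. v k \<noteq> 0 \<and> (\<forall>n. n \<noteq> k \<longrightarrow> v n = 0) \<and> (of_int k)^2 < \<alpha> / 2)))"
proof (intro conjI allI impI)
  fix v assume "equilibrium \<alpha> v \<and> (\<exists>m k. m \<noteq> k \<and> v m \<noteq> 0 \<and> v k \<noteq> 0)"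
  then show "unstable_eq \<alpha> v"
    using unstable_eq_multi_mode by blast
next
  fix v assume eq: "equilibrium \<alpha> v"
  consider "\<forall>n. v n = 0"
    | k where "v k \<noteq> 0" "\<forall>n. n \<noteq> k \<longrightarrow> v n = 0"
    | m k where "m \<noteq> k" "v m \<noteq> 0" "v k \<noteq> 0"
    by blast
  then show "stable_eq \<alpha> v \<longleftrightarrow>
      (\<exists>k::int. v k \<noteq> 0 \<and> (\<forall>n. n \<noteq> k \<longrightarrow> v n = 0) \<and> (of_int k)^2 < \<alpha> / 2)"
  proof cases
    case 1
    then have "v = (\<lambda>_. 0)" by auto
    then show ?thesis using not_stable_eq_zero[OF assms] by simp
  next
    case (2 k)
    then show ?thesis using stable_eq_single_mode_iff[OF eq 2] by auto
  next
    case (3 m k)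
    then show ?thesis using not_stable_eq_multi_mode[OF eq 3] by metis
  qed
qed

end
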